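(* Let $A\neq 1$ and $B\neq 0$ be real constants and let $(x_n)_{n\ge0}$ be the solution of $$x_{n+10}=\frac{x_n}{A+B\,x_nx_{n+2}x_{n+4}x_{n+6}x_{n+8}},\qquad n\ge 0,$$ with initial conditions $x_0,\dots,x_9$. Suppose the initial conditions satisfy $x_ix_{i+2}x_{i+4}x_{i+6}x_{i+8}=\frac{1-A}{B}$ for $i=0,1$, and $x_i\neq x_{i+2}$, $x_i\neq x_{i+5}$ (for those indices $i$ with the terms among $x_0,\dots,x_9$). Then the solution is periodic with period $10$. *)

theory Defs
  imports Complex_Main
begin

end

theory Submission
  imports Defs
begin

text \<open>Write \<open>P n = x n x (n + 2) x (n + 4) x (n + 6) x (n + 8)\<close>. Whenever \<open>P n = (1 - A) / B\<close>,
  the denominator of the recurrence is \<open>1\<close>, so \<open>x (n + 10) = x n\<close>, and then \<open>P (n + 2) = P n\<close>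
  because the two windows differ only by exchanging \<open>x n\<close> for \<open>x (n + 10)\<close>. So the invariant
  propagates from \<open>n = 0, 1\<close> to all \<open>n\<close>, giving period \<open>10\<close>; nothing here depends on the step
  \<open>2\<close> or the window length \<open>5\<close>. A period \<open>p < 10\<close> together with the period \<open>10\<close> would give
  the period \<open>gcd p 10 \<in> {1, 2, 5}\<close>, contradicting \<open>x 0 \<noteq> x 2\<close> or \<open>x 0 \<noteq> x 5\<close>.\<close>

lemma periodic_mult:
  fixes x :: "nat \<Rightarrow> 'a"
  assumes "\<And>n. x (n + p) = x n"
  shows "x (n + p * k) = x n"
proof (induction k)
  case (Suc k)
  have "x (n + p * Suc k) = x (n + p * k + p)" by (simp add: algebra_simps)
  also have "\<dots> = x n" using assms Suc.IH by simp
  finally show ?case .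
qed simp

lemma periodic_dvd:
  fixes x :: "nat \<Rightarrow> 'a"
  assumes "\<And>n. x (n + p) = x n" and "p dvd q"
  shows "x (n + q) = x n"
proof -
  from assms(2) obtain k where "q = p * k" ..
  then show ?thesis using periodic_mult[of x p, OF assms(1)] by simp
qed

lemma periodic_gcd:
  fixes x :: "nat \<Rightarrow> 'a"
  assumes p: "\<And>n. x (n + p) = x n" and q: "\<And>n. x (n + q) = x n"
  shows "x (n + gcd p q) = x n"
proof (cases "p = 0")
  case False
  then obtain a b where bezout: "p * a = q * b + gcd p q" using bezout_nat by blast
  have "x (n + gcd p q) = x (n + gcd p q + q * b)" using periodic_mult[of x q, OF q] by simp
  also have "\<dots> = x (n + p * a)" using bezout by (simp add: algebra_simps)
  also have "\<dots> = x n" using periodic_mult[of x p, OF p] by simp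
  finally show ?thesis .
qed (simp add: q)

lemma gcd_10_dvd_2_or_eq_5:
  fixes p :: nat
  assumes "0 < p" and "p < 10"
  shows "gcd p 10 dvd 2 \<or> gcd p 10 = 5"
proof -
  have "p \<in> {1, 2, 3, 4, 5, 6, 7, 8, 9}" using assms by auto
  then show ?thesis by (auto simp: gcd_non_0_nat)
qed

lemma prod_window_shift:
  fixes x :: "nat \<Rightarrow> 'a :: comm_monoid_mult"
  assumes "0 < m" and "x (n + d * m) = x n"
  shows "(\<Prod>j<m. x (n + d + d * j)) = (\<Prod>j<m. x (n + d * j))"
proof -
  obtain l where m: "m = Suc l" using assms(1) gr0_implies_Suc by blast
  have "(\<Prod>j<m. x (n + d + d * j)) = (\<Prod>j<l. x (n + d * Suc j)) * x (n + d * m)"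
    by (simp add: m algebra_simps)
  also have "\<dots> = x n * (\<Prod>j<l. x (n + d * Suc j))" using assms(2) by (simp add: mult.commute)
  also have "\<dots> = (\<Prod>j<m. x (n + d * j))" unfolding m prod.lessThan_Suc_shift by simp
  finally show ?thesis .
qed

locale product_recurrence =
  fixes A B :: real and d m :: nat and x :: "nat \<Rightarrow> real"
  assumes B_nonzero: "B \<noteq> 0" and d_pos: "0 < d" and m_pos: "0 < m"
    and rec: "\<And>n. x (n + d * m) = x n / (A + B * (\<Prod>j<m. x (n + d * j)))"
begin

lemma step_if_window_invariant:
  assumes "(\<Prod>j<m. x (n + d * j)) = (1 - A) / B"
  shows "x (n + d * m) = x n"
  using rec[of n] assms B_nonzero by simp

lemma window_invariant:
  assumes init: "\<And>i. i < d \<Longrightarrow> (\<Prod>j<m. x (i + d * j)) = (1 - A) / B"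
  shows "(\<Prod>j<m. x (n + d * j)) = (1 - A) / B"
proof (induction n rule: less_induct)
  case (less n)
  show ?case
  proof (cases "n < d")
    case False
    then obtain k where n: "n = k + d" using le_add_diff_inverse2 not_less by metis
    have invariant: "(\<Prod>j<m. x (k + d * j)) = (1 - A) / B" using less n d_pos by simp
    then have "x (k + d * m) = x k" by (rule step_if_window_invariant)
    from prod_window_shift[OF m_pos this] invariant show ?thesis by (simp add: n)
  qed (rule init)
qed

lemma periodic_if_initial_windows_invariant:
  assumes "\<And>i. i < d \<Longrightarrow> (\<Prod>j<m. x (i + d * j)) = (1 - A) / B"
  shows "x (n + d * m) = x n"
  using assms step_if_window_invariant window_invariant by blast

end

theorem theorem2:
  fixes A B :: real and x :: "nat \<Rightarrow> real"
  assumes "A \<noteq> 1" and "B \<noteq> 0"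
    and rec: "\<And>n. x (n + 10) = x n / (A + B * x n * x (n + 2) * x (n + 4) * x (n + 6) * x (n + 8))"
    and init: "\<And>i. i \<le> 1 \<Longrightarrow> x i * x (i + 2) * x (i + 4) * x (i + 6) * x (i + 8) = (1 - A) / B"
    and d2: "\<And>i. i \<le> 7 \<Longrightarrow> x i \<noteq> x (i + 2)"
    and d5: "\<And>i. i \<le> 4 \<Longrightarrow> x i \<noteq> x (i + 5)"
  shows "(\<forall>n. x (n + 10) = x n) \<and> (\<forall>p. 0 < p \<and> p < 10 \<longrightarrow> \<not> (\<forall>n. x (n + p) = x n))"
proof -
  have window: "(\<Prod>j<5. x (n + 2 * j)) = x n * x (n + 2) * x (n + 4) * x (n + 6) * x (n + 8)" for n
    by (simp add: numeral_eq_Suc mult_ac)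
  interpret product_recurrence A B 2 5 x
    using \<open>B \<noteq> 0\<close> rec by unfold_locales (simp_all add: window mult.assoc)
  have period: "x (n + 10) = x n" for n
    using periodic_if_initial_windows_invariant[of n] init by (simp add: window)
  have "\<not> (\<forall>n. x (n + p) = x n)" if "0 < p" "p < 10" for p
  proof
    assume "\<forall>n. x (n + p) = x n"
    then have "x (n + gcd p 10) = x n" for n using period periodic_gcd by blast
    then have "x (0 + 2) = x 0 \<or> x (0 + 5) = x 0"
      using gcd_10_dvd_2_or_eq_5[OF that] periodic_dvd by metis
    with d2[of 0] d5[of 0] show False by auto
  qed
  with period show ?thesis by blast
qed

end
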